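(* Let $n\ge2$, let $K$ be a field and let $\mathcal{V}=(V,K')$ be a model of the theory of infinite-dimensional non-degenerate alternating $n$-linear spaces over fields elementarily equivalent to $K$, in the language $\mathcal{L}^{K}_{\theta,f}$. Let $U=\{v_i:i<\kappa\}\subseteq V$ be a $K'$-linearly independent set, and let $L\subseteq K'$ be a subfield containing $\{\langle v_{i_1},\ldots,v_{i_n}\rangle_n:0\le i_1<\cdots<i_n<\kappa\}$. Then the $\mathcal{L}^{K}_{\theta,f}$-substructure of $\mathcal{V}$ generated by $U\cup L$ equals $(\operatorname{Span}_L(U),L)$.
   Context: Alternating: the form vanishes on linearly dependent tuples; non-degenerate: for every nonzero $t\in\bigwedge^{n-1}V$ there is $w$ with $\langle t,w\rangle_2\ne0$, where $\langle\overline{v_1\otimes\cdots\otimes v_{n-1}},v\rangle_2=\langle v_1,\ldots,v_{n-1},v\rangle_n$. The language $\mathcal{L}^{K}_{\theta,f}$: sorts $V,K$; field language $\{+,\cdot,-,{}^{-1},0,1\}$ on $K$; $+_V,0_V$; scalar multiplication; the form symbol; predicates $\theta_p$ for linear independence; functions $f^p_i(v;v_1,\ldots,v_p)$ equal to the $i$-th coefficient of $v$ in terms of $v_1,\ldots,v_p$ if these are linearly independent and $v$ is in their span, and $0$ otherwise; and an expansion $\mathcal{L}^K$ of the field language by $\emptyset$-definable relations (no new function or constant symbols). *)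

theory Defs
  imports Complex_Main
begin

definition lin_indep_list :: "('k::field \<Rightarrow> 'v::ab_group_add \<Rightarrow> 'v) \<Rightarrow> 'v list \<Rightarrow> bool" where
  "lin_indep_list scale xs \<longleftrightarrow> distinct xs \<and> \<not> module.dependent scale (set xs)"

definition multilinear_form ::
  "('k::field \<Rightarrow> 'v::ab_group_add \<Rightarrow> 'v) \<Rightarrow> nat \<Rightarrow> ('v list \<Rightarrow> 'k) \<Rightarrow> bool" where
  "multilinear_form scale m \<beta> \<longleftrightarrow>
     (\<forall>xs i x y a b. length xs = m \<longrightarrow> i < m \<longrightarrow>
        \<beta> (xs[i := scale a x + scale b y]) = a * \<beta> (xs[i := x]) + b * \<beta> (xs[i := y]))"

definition alternating_form ::
  "('k::field \<Rightarrow> 'v::ab_group_add \<Rightarrow> 'v) \<Rightarrow> nat \<Rightarrow> ('v list \<Rightarrow> 'k) \<Rightarrow> bool" where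
  "alternating_form scale m \<beta> \<longleftrightarrow>
     multilinear_form scale m \<beta> \<and>
     (\<forall>xs. length xs = m \<longrightarrow> \<not> lin_indep_list scale xs \<longrightarrow> \<beta> xs = 0)"

text \<open>Elements of the exterior power of degree m are represented by formal sums
  sum_j c_j (t_j1 wedge ... wedge t_jm), given as a list of pairs (c_j, t_j) with
  length t_j = m.  Such a formal sum is zero in the exterior power iff every
  alternating m-linear form (the dual of the exterior power) vanishes on it.\<close>
definition wedge_nonzero ::
  "('k::field \<Rightarrow> 'v::ab_group_add \<Rightarrow> 'v) \<Rightarrow> nat \<Rightarrow> ('k \<times> 'v list) list \<Rightarrow> bool" where
  "wedge_nonzero scale m t \<longleftrightarrow>
     (\<exists>\<beta>. alternating_form scale m \<beta> \<and> (\<Sum>(c, ts)\<leftarrow>t. c * \<beta> ts) \<noteq> 0)"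

text \<open>Non-degeneracy of an alternating n-form: for every nonzero t in the
  (n-1)-th exterior power there is w with <t,w>_2 \<noteq> 0, where
  <t1 wedge ... wedge t_{n-1}, w>_2 = <t1,...,t_{n-1},w>_n, extended linearly.\<close>
definition nondegenerate_form ::
  "('k::field \<Rightarrow> 'v::ab_group_add \<Rightarrow> 'v) \<Rightarrow> nat \<Rightarrow> ('v list \<Rightarrow> 'k) \<Rightarrow> bool" where
  "nondegenerate_form scale n form \<longleftrightarrow>
     (\<forall>t. (\<forall>(c, ts)\<in>set t. length ts = n - 1) \<longrightarrow> wedge_nonzero scale (n - 1) t \<longrightarrow>
        (\<exists>w. (\<Sum>(c, ts)\<leftarrow>t. c * form (ts @ [w])) \<noteq> 0))"

text \<open>The function symbols f^p_i (here with 0-based index i < p): the i-th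
  coefficient of v in terms of v_1..v_p if these are linearly independent and v is in
  their span, and 0 otherwise.\<close>
definition coord_fun ::
  "('k::field \<Rightarrow> 'v::ab_group_add \<Rightarrow> 'v) \<Rightarrow> nat \<Rightarrow> 'v \<Rightarrow> 'v list \<Rightarrow> 'k" where
  "coord_fun scale i v vs =
     (if lin_indep_list scale vs \<and> v \<in> module.span scale (set vs)
      then (THE a. \<exists>c. v = (\<Sum>j<length vs. scale (c j) (vs ! j)) \<and> c i = a)
      else 0)"

definition subfield :: "'k::field set \<Rightarrow> bool" where
  "subfield L \<longleftrightarrow> 0 \<in> L \<and> 1 \<in> L \<and> (\<forall>x\<in>L. \<forall>y\<in>L. x + y \<in> L \<and> x * y \<in> L)
     \<and> (\<forall>x\<in>L. - x \<in> L \<and> inverse x \<in> L)"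

definition span_over :: "('k::field \<Rightarrow> 'v::ab_group_add \<Rightarrow> 'v) \<Rightarrow> 'k set \<Rightarrow> 'v set \<Rightarrow> 'v set" where
  "span_over scale L U =
     {\<Sum>u\<in>F. scale (c u) u | F c. finite F \<and> F \<subseteq> U \<and> (\<forall>u\<in>F. c u \<in> L)}"

text \<open>The L^K_{theta,f}-substructure generated by a set SV of vectors and a set SK
  of scalars: the least pair of sets containing them and closed under all function
  symbols (field operations incl. inverse (with inverse 0 = 0), 0, 1, +_V, 0_V,
  scalar multiplication, the form symbol, the functions f^p_i).  Relation symbols
  (theta_p and the symbols of L^K) do not affect the generated substructure.\<close>
inductive genV and genK for scale :: "'k::field \<Rightarrow> 'v::ab_group_add \<Rightarrow> 'v"
  and n :: nat and form :: "'v list \<Rightarrow> 'k" and SV :: "'v set" and SK :: "'k set" where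
  baseV: "v \<in> SV \<Longrightarrow> genV scale n form SV SK v"
| zeroV: "genV scale n form SV SK 0"
| addV: "genV scale n form SV SK v \<Longrightarrow> genV scale n form SV SK w \<Longrightarrow> genV scale n form SV SK (v + w)"
| smul: "genK scale n form SV SK a \<Longrightarrow> genV scale n form SV SK v \<Longrightarrow> genV scale n form SV SK (scale a v)"
| baseK: "a \<in> SK \<Longrightarrow> genK scale n form SV SK a"
| zeroK: "genK scale n form SV SK 0"
| oneK: "genK scale n form SV SK 1"
| addK: "genK scale n form SV SK a \<Longrightarrow> genK scale n form SV SK b \<Longrightarrow> genK scale n form SV SK (a + b)"
| mulK: "genK scale n form SV SK a \<Longrightarrow> genK scale n form SV SK b \<Longrightarrow> genK scale n form SV SK (a * b)"
| negK: "genK scale n form SV SK a \<Longrightarrow> genK scale n form SV SK (- a)"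
| invK: "genK scale n form SV SK a \<Longrightarrow> genK scale n form SV SK (inverse a)"
| formK: "length xs = n \<Longrightarrow> (\<forall>x\<in>set xs. genV scale n form SV SK x) \<Longrightarrow> genK scale n form SV SK (form xs)"
| coordK: "i < length vs \<Longrightarrow> genV scale n form SV SK v \<Longrightarrow> (\<forall>x\<in>set vs. genV scale n form SV SK x)
           \<Longrightarrow> genK scale n form SV SK (coord_fun scale i v vs)"

end

theory Submission
  imports Defs "HOL-Library.Multiset"
begin

text \<open>Everything generated from U \<union> L stays inside span_L(U) \<times> L; the reverse inclusion is
  immediate. For the form: by multilinearity its values on vectors of span_L(U) are L-linear
  combinations of its values on tuples from U, which by alternation are 0 or \<plusminus> its values on
  increasing tuples, hence in L. For the coordinate functions: if w and independent v_1, ..., v_p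
  lie in span_L(U) and w = \<Sum> c_j v_j, then in coordinates with respect to U this linear relation
  is a homogeneous system over L; Gaussian elimination gives a nontrivial relation with
  coefficients in L, which must involve w, and solving it for w shows that every c_j lies in L.\<close>

lemma
  assumes "subfield L"
  shows subfield_zero: "0 \<in> L" and subfield_one: "1 \<in> L"
    and subfield_add: "x \<in> L \<Longrightarrow> y \<in> L \<Longrightarrow> x + y \<in> L"
    and subfield_mult: "x \<in> L \<Longrightarrow> y \<in> L \<Longrightarrow> x * y \<in> L"
    and subfield_uminus: "x \<in> L \<Longrightarrow> - x \<in> L"
    and subfield_inverse: "x \<in> L \<Longrightarrow> inverse x \<in> L"
    and subfield_diff: "x \<in> L \<Longrightarrow> y \<in> L \<Longrightarrow> x - y \<in> L"
    and subfield_divide: "x \<in> L \<Longrightarrow> y \<in> L \<Longrightarrow> x / y \<in> L"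
  using assms unfolding subfield_def by (metis diff_conv_add_uminus divide_inverse)+

lemma subfield_sum: "subfield L \<Longrightarrow> (\<And>i. i \<in> A \<Longrightarrow> f i \<in> L) \<Longrightarrow> sum f A \<in> L"
  by (induction A rule: infinite_finite_induct) (auto simp: subfield_zero subfield_add)

lemma sum_distinct_set_conv_nth:
  "distinct xs \<Longrightarrow> (\<Sum>x\<in>set xs. g x) = (\<Sum>j<length xs. g (xs ! j))"
  by (simp add: sum.distinct_set_conv_list sum_list_sum_nth atLeast0LessThan)

text \<open>A linear system is given by its columns: a j u is the coefficient of the j-th unknown
  in equation u. Eliminating with the pivot a m r clears column m.\<close>

definition eliminate :: "(nat \<Rightarrow> 'e \<Rightarrow> 'k::field) \<Rightarrow> nat \<Rightarrow> 'e \<Rightarrow> nat \<Rightarrow> 'e \<Rightarrow> 'k" where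
  "eliminate a m r j u = a j u - a j r / a m r * a m u"

lemma sum_eliminate:
  "(\<Sum>j<m. c j * a j u) = (\<Sum>j<m. c j * eliminate a m r j u) + (\<Sum>j<m. c j * a j r) / a m r * a m u"
  by (simp add: eliminate_def algebra_simps sum_subtractf sum_distrib_left sum_distrib_right sum_divide_distrib)

lemma eliminate_solution:
  assumes r: "a m r \<noteq> 0" and k: "\<forall>u. (\<Sum>j<Suc m. k j * a j u) = 0"
  shows "(\<Sum>j<m. k j * eliminate a m r j u) = 0"
proof -
  have k_row: "(\<Sum>j<m. k j * a j u) = - k m * a m u" for u
    using k by (simp add: add_eq_0_iff)
  have "(\<Sum>j<m. k j * eliminate a m r j u) = (\<Sum>j<m. k j * a j u) - (\<Sum>j<m. k j * a j r) / a m r * a m u"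
    using sum_eliminate[where c = k and a = a and m = m and u = u and r = r] by (simp add: eq_diff_eq)
  then show ?thesis using r by (simp add: k_row)
qed

lemma eliminate_solution_extend:
  assumes l: "\<forall>u. (\<Sum>j<m. l j * eliminate a m r j u) = 0"
  shows "(\<Sum>j<Suc m. (l(m := - (\<Sum>j<m. l j * a j r) / a m r)) j * a j u) = 0"
proof -
  have "(\<Sum>j<Suc m. (l(m := - (\<Sum>j<m. l j * a j r) / a m r)) j * a j u)
      = (\<Sum>j<m. l j * a j u) - (\<Sum>j<m. l j * a j r) / a m r * a m u"
    by simp
  then show ?thesis using sum_eliminate[where c = l and a = a and m = m and u = u and r = r] l by simp
qed

lemma subfield_homogeneous_solution:
  fixes a :: "nat \<Rightarrow> 'e \<Rightarrow> 'k::field"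
  assumes L: "subfield L" and "\<forall>j<p. \<forall>u. a j u \<in> L"
    and "\<forall>u. (\<Sum>j<p. k j * a j u) = 0" and "\<exists>j<p. k j \<noteq> 0"
  shows "\<exists>l. (\<forall>j<p. l j \<in> L) \<and> (\<forall>u. (\<Sum>j<p. l j * a j u) = 0) \<and> (\<exists>j<p. l j \<noteq> 0)"
  using assms(2-4)
proof (induction p arbitrary: a k)
  case 0
  then show ?case by simp
next
  case (Suc m)
  show ?case
  proof (cases "\<forall>u. a m u = 0")
    case True
    show ?thesis
      by (rule exI[of _ "\<lambda>j. if j = m then 1 else 0"]) (simp add: True subfield_zero[OF L] subfield_one[OF L])
  next
    case False
    then obtain u0 where u0: "a m u0 \<noteq> 0" by auto
    have "\<exists>j<m. k j \<noteq> 0"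
    proof (rule ccontr)
      assume "\<not> (\<exists>j<m. k j \<noteq> 0)"
      then have "k m * a m u0 = 0" using Suc.prems(2)[rule_format, of u0] by simp
      with \<open>\<not> (\<exists>j<m. k j \<noteq> 0)\<close> show False using u0 Suc.prems(3) less_Suc_eq by auto
    qed
    moreover have "\<forall>j<m. \<forall>u. eliminate a m u0 j u \<in> L"
      using Suc.prems(1) by (simp add: eliminate_def subfield_diff[OF L] subfield_mult[OF L] subfield_divide[OF L])
    ultimately obtain l where l: "\<forall>j<m. l j \<in> L" "\<forall>u. (\<Sum>j<m. l j * eliminate a m u0 j u) = 0"
      "\<exists>j<m. l j \<noteq> 0"
      using Suc.IH[of "eliminate a m u0" k] eliminate_solution[OF u0 Suc.prems(2)] by blast
    let ?l = "l(m := - (\<Sum>j<m. l j * a j u0) / a m u0)"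
    have "\<forall>j<Suc m. ?l j \<in> L"
      using l(1) Suc.prems(1) by (auto simp: less_Suc_eq intro!: subfield_uminus[OF L]
          subfield_divide[OF L] subfield_mult[OF L] subfield_sum[OF L])
    moreover have "\<exists>j<Suc m. ?l j \<noteq> 0" using l(3) by auto
    ultimately show ?thesis using eliminate_solution_extend[OF l(2)] by blast
  qed
qed

context vector_space
begin

lemma multilinear_form_add:
  assumes "multilinear_form scale m \<beta>" "length xs = m" "i < m"
  shows "\<beta> (xs[i := x + y]) = \<beta> (xs[i := x]) + \<beta> (xs[i := y])"
  using assms(1)[unfolded multilinear_form_def, rule_format, OF assms(2,3), of 1 x 1 y] by simp

lemma multilinear_form_scale:
  assumes "multilinear_form scale m \<beta>" "length xs = m" "i < m"
  shows "\<beta> (xs[i := c *s x]) = c * \<beta> (xs[i := x])"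
  using assms(1)[unfolded multilinear_form_def, rule_format, OF assms(2,3), of c x 0 0] by simp

lemma multilinear_form_sum:
  assumes "multilinear_form scale m \<beta>" "length xs = m" "i < m"
  shows "\<beta> (xs[i := (\<Sum>u\<in>F. c u *s g u)]) = (\<Sum>u\<in>F. c u * \<beta> (xs[i := g u]))"
proof (induction F rule: infinite_finite_induct)
  case (infinite F)
  then show ?case using multilinear_form_scale[OF assms, of 0 0] by simp
next
  case empty
  then show ?case using multilinear_form_scale[OF assms, of 0 0] by simp
next
  case (insert x F)
  then show ?case using multilinear_form_add[OF assms] multilinear_form_scale[OF assms] by simp
qed

lemma alternating_form_swap:
  assumes alt: "alternating_form scale m \<beta>" and z: "length z = m" and ij: "i < m" "j < m" "i \<noteq> j"
  shows "\<beta> (z[i := z ! j, j := z ! i]) = - \<beta> z"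
proof -
  have ml: "multilinear_form scale m \<beta>" using alt by (simp add: alternating_form_def)
  define f where "f a b = \<beta> (z[i := a, j := b])" for a b
  have add_right: "f a (b + c) = f a b + f a c" for a b c
    unfolding f_def using multilinear_form_add[OF ml _ ij(2), of "z[i := a]"] z by simp
  have add_left: "f (a + b) c = f a c + f b c" for a b c
  proof -
    have "z[i := d, j := c] = z[j := c, i := d]" for d using ij by (simp add: list_update_swap)
    then show ?thesis unfolding f_def using multilinear_form_add[OF ml _ ij(1), of "z[j := c]"] z by simp
  qed
  have diag: "f a a = 0" for a
  proof -
    have "z[i := a, j := a] ! i = z[i := a, j := a] ! j"
      using ij z by (simp add: nth_list_update)
    then have "\<not> distinct (z[i := a, j := a])"
      using ij z by (metis length_list_update nth_eq_iff_index_eq)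
    then show ?thesis using alt z unfolding f_def alternating_form_def lin_indep_list_def by simp
  qed
  have "f (z ! i) (z ! j) + f (z ! j) (z ! i)
      = f (z ! i + z ! j) (z ! i + z ! j) - f (z ! i) (z ! i) - f (z ! j) (z ! j)"
    by (simp add: add_left add_right)
  also have "\<dots> = 0" by (simp add: diag)
  finally show ?thesis by (simp add: f_def add_eq_0_iff)
qed

lemma alternating_form_mset_eq_distinct:
  assumes alt: "alternating_form scale m \<beta>" and xs: "length xs = m" "distinct xs"
    and "mset ys = mset xs"
  shows "\<beta> ys = \<beta> xs \<or> \<beta> ys = - \<beta> xs"
  using assms(4)
proof (induction "card {i. i < m \<and> ys ! i \<noteq> xs ! i}" arbitrary: ys rule: less_induct)
  case less
  have ys: "length ys = m" using less.prems xs by (metis mset_eq_length)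
  show ?case
  proof (cases "ys = xs")
    case True
    then show ?thesis by simp
  next
    case False
    then obtain i where i: "i < m" "ys ! i \<noteq> xs ! i" using ys xs nth_equalityI by metis
    have "xs ! i \<in> set ys" using less.prems i xs by (metis mset_eq_setD nth_mem)
    then obtain j where j: "j < m" "ys ! j = xs ! i" using ys by (metis in_set_conv_nth)
    have "i \<noteq> j" using i j by auto
    have "ys ! j \<noteq> xs ! j" using i j \<open>i \<noteq> j\<close> xs by (simp add: nth_eq_iff_index_eq)
    \<comment> \<open>Swapping positions i and j of ys fixes position i and disturbs no other agreement with xs.\<close>
    define ys' where "ys' = ys[j := ys ! i, i := ys ! j]"
    have "mset ys' = mset xs" unfolding ys'_def using less.prems i j ys mset_swap[of i ys j] by simp
    moreover have "{k. k < m \<and> ys' ! k \<noteq> xs ! k} \<subset> {k. k < m \<and> ys ! k \<noteq> xs ! k}"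
      using i j \<open>ys ! j \<noteq> xs ! j\<close> \<open>i \<noteq> j\<close> ys unfolding ys'_def by (auto simp: nth_list_update)
    then have "card {k. k < m \<and> ys' ! k \<noteq> xs ! k} < card {k. k < m \<and> ys ! k \<noteq> xs ! k}"
      by (rule psubset_card_mono[rotated]) simp
    ultimately have "\<beta> ys' = \<beta> xs \<or> \<beta> ys' = - \<beta> xs" using less.hyps by blast
    moreover have "\<beta> ys' = - \<beta> ys" unfolding ys'_def using alternating_form_swap[OF alt ys j(1) i(1)] \<open>i \<noteq> j\<close> by simp
    ultimately show ?thesis by (metis minus_minus)
  qed
qed

lemma alternating_form_mset_eq:
  assumes alt: "alternating_form scale m \<beta>" and xs: "length xs = m" and ys: "mset ys = mset xs"
  shows "\<beta> ys = \<beta> xs \<or> \<beta> ys = - \<beta> xs"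
proof (cases "distinct xs")
  case True
  then show ?thesis using alternating_form_mset_eq_distinct assms by blast
next
  case False
  then have "\<not> distinct ys" using ys mset_eq_imp_distinct_iff by metis
  moreover have "length ys = m" using xs ys by (metis mset_eq_length)
  ultimately show ?thesis using False alt xs unfolding alternating_form_def lin_indep_list_def by simp
qed

lemma span_over_sumI:
  "finite F \<Longrightarrow> F \<subseteq> U \<Longrightarrow> (\<And>u. u \<in> F \<Longrightarrow> c u \<in> L) \<Longrightarrow> (\<Sum>u\<in>F. c u *s u) \<in> span_over scale L U"
  unfolding span_over_def by blast

lemma span_overE:
  assumes "x \<in> span_over scale L U"
  obtains F c where "finite F" "F \<subseteq> U" "\<forall>u\<in>F. c u \<in> L" "x = (\<Sum>u\<in>F. c u *s u)"
  using assms unfolding span_over_def by blast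

lemma span_over_superset:
  assumes "subfield L"
  shows "U \<subseteq> span_over scale L U"
proof
  fix u assume "u \<in> U"
  then have "(\<Sum>w\<in>{u}. 1 *s w) \<in> span_over scale L U"
    using subfield_one[OF assms] by (intro span_over_sumI) auto
  then show "u \<in> span_over scale L U" by simp
qed

lemma span_over_iff:
  assumes U: "independent U" and L: "subfield L"
  shows "x \<in> span_over scale L U \<longleftrightarrow> x \<in> span U \<and> (\<forall>u. representation U x u \<in> L)"
proof
  assume "x \<in> span_over scale L U"
  then obtain F c where F: "finite F" "F \<subseteq> U" "\<forall>u\<in>F. c u \<in> L" and x: "x = (\<Sum>u\<in>F. c u *s u)"
    by (rule span_overE)
  have "representation U x b = (\<Sum>u\<in>F. if b = u then c u else 0)" for b
  proof -
    have "representation U x b = (\<Sum>u\<in>F. representation U (c u *s u) b)"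
      unfolding x using F by (subst representation_sum[OF U]) (auto intro: span_scale span_base)
    also have "\<dots> = (\<Sum>u\<in>F. if b = u then c u else 0)"
      using F by (intro sum.cong) (auto simp: representation_scale[OF U span_base] representation_basis[OF U])
    finally show ?thesis .
  qed
  moreover have "x \<in> span U"
    unfolding x using F by (intro span_sum span_scale span_base) auto
  ultimately show "x \<in> span U \<and> (\<forall>u. representation U x u \<in> L)"
    using F by (simp add: subfield_zero[OF L])
next
  assume x: "x \<in> span U \<and> (\<forall>u. representation U x u \<in> L)"
  let ?F = "{u. representation U x u \<noteq> 0}"
  have "(\<Sum>u\<in>?F. representation U x u *s u) \<in> span_over scale L U"
    using x finite_representation representation_ne_zero by (intro span_over_sumI) auto
  then show "x \<in> span_over scale L U"
    using x U by (simp add: sum_nonzero_representation_eq)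
qed

lemma span_over_zero: "0 \<in> span_over scale L U"
  using span_over_sumI[of "{}"] by simp

lemma span_over_add:
  "independent U \<Longrightarrow> subfield L \<Longrightarrow> x \<in> span_over scale L U \<Longrightarrow> y \<in> span_over scale L U
    \<Longrightarrow> x + y \<in> span_over scale L U"
  by (simp add: span_over_iff representation_add span_add subfield_add)

lemma span_over_scale:
  assumes L: "subfield L" and a: "a \<in> L" and x: "x \<in> span_over scale L U"
  shows "a *s x \<in> span_over scale L U"
proof -
  obtain F c where F: "finite F" "F \<subseteq> U" "\<forall>u\<in>F. c u \<in> L" and x: "x = (\<Sum>u\<in>F. c u *s u)"
    using x by (rule span_overE)
  have "(\<Sum>u\<in>F. (a * c u) *s u) \<in> span_over scale L U"
    using F a by (intro span_over_sumI) (auto intro: subfield_mult[OF L])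
  then show ?thesis by (simp add: x scale_sum_right)
qed

lemma alternating_form_sorted_values:
  fixes v :: "'i::linorder \<Rightarrow> 'b"
  assumes L: "subfield L" and alt: "alternating_form scale n \<beta>"
    and sorted_values: "\<forall>is. length is = n \<longrightarrow> sorted_wrt (<) is \<longrightarrow> set is \<subseteq> I \<longrightarrow> \<beta> (map v is) \<in> L"
    and xs: "length xs = n" "set xs \<subseteq> v ` I"
  shows "\<beta> xs \<in> L"
proof (cases "distinct xs")
  case False
  then have "\<beta> xs = 0" using alt xs(1) by (simp add: alternating_form_def lin_indep_list_def)
  then show ?thesis using subfield_zero[OF L] by simp
next
  case True
  define "is" where "is = map (inv_into I v) xs"
  have "map v is = xs" unfolding is_def map_map
    using xs(2) by (intro map_idI) (auto simp: f_inv_into_f)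
  moreover have "set is \<subseteq> I" unfolding is_def using xs(2) by (auto intro: inv_into_into)
  ultimately have "sorted_wrt (<) (sort is)" "length (sort is) = n" "set (sort is) \<subseteq> I"
    using True xs(1) by (auto simp: strict_sorted_iff distinct_map)
  then have "\<beta> (map v (sort is)) \<in> L" using sorted_values by blast
  moreover have "mset xs = mset (map v (sort is))" using \<open>map v is = xs\<close> by auto
  with \<open>length (sort is) = n\<close> have "\<beta> xs = \<beta> (map v (sort is)) \<or> \<beta> xs = - \<beta> (map v (sort is))"
    by (intro alternating_form_mset_eq[OF alt]) simp_all
  ultimately show ?thesis using subfield_uminus[OF L] by auto
qed

lemma multilinear_form_update_span_over:
  assumes L: "subfield L" and ml: "multilinear_form scale n \<beta>" and xs: "length xs = n" "k < n"
    and "xs ! k \<in> span_over scale L U" and update_values: "\<forall>u\<in>U. \<beta> (xs[k := u]) \<in> L"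
  shows "\<beta> xs \<in> L"
proof -
  obtain F c where F: "finite F" "F \<subseteq> U" "\<forall>u\<in>F. c u \<in> L" and y: "xs ! k = (\<Sum>u\<in>F. c u *s u)"
    using \<open>xs ! k \<in> span_over scale L U\<close> by (rule span_overE)
  have "\<beta> xs = (\<Sum>u\<in>F. c u * \<beta> (xs[k := u]))"
    using multilinear_form_sum[OF ml xs, of c "\<lambda>u. u" F] by (simp add: y[symmetric])
  also have "\<dots> \<in> L"
    using F update_values by (auto intro!: subfield_sum[OF L] subfield_mult[OF L])
  finally show ?thesis .
qed

lemma multilinear_form_span_over_values:
  assumes L: "subfield L" and ml: "multilinear_form scale n \<beta>"
    and base_values: "\<forall>xs. length xs = n \<longrightarrow> set xs \<subseteq> U \<longrightarrow> \<beta> xs \<in> L"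
    and xs: "length xs = n" "set xs \<subseteq> span_over scale L U"
  shows "\<beta> xs \<in> L"
proof -
  \<comment> \<open>Induction on the number k of leading entries that are not yet known to lie in U.\<close>
  have "\<forall>xs. length xs = n \<longrightarrow> set xs \<subseteq> span_over scale L U \<longrightarrow> set (drop k xs) \<subseteq> U \<longrightarrow> \<beta> xs \<in> L" for k
  proof (induction k)
    case 0
    then show ?case using base_values by simp
  next
    case (Suc k)
    show ?case
    proof (intro allI impI)
      fix xs assume xs: "length xs = n" "set xs \<subseteq> span_over scale L U" "set (drop (Suc k) xs) \<subseteq> U"
      show "\<beta> xs \<in> L"
      proof (cases "k < n")
        case False
        then show ?thesis using Suc.IH xs by simp
      next
        case True
        have "\<beta> (xs[k := u]) \<in> L" if "u \<in> U" for u
        proof -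
          have "set (xs[k := u]) \<subseteq> span_over scale L U"
            using xs(2) that span_over_superset[OF L] set_update_subset_insert[of xs k u] by blast
          moreover have "drop k (xs[k := u]) = u # drop (Suc k) xs"
            using True xs(1) by (metis Cons_nth_drop_Suc drop_update_cancel length_list_update lessI nth_list_update_eq)
          then have "set (drop k (xs[k := u])) \<subseteq> U"
            using xs(3) that by auto
          ultimately show ?thesis using Suc.IH xs(1) by simp
        qed
        moreover have "xs ! k \<in> span_over scale L U" using True xs(1,2) by (simp add: subset_iff)
        ultimately show ?thesis using multilinear_form_update_span_over[OF L ml xs(1) True] by blast
      qed
    qed
  qed
  from this[of n] show ?thesis using xs by simp
qed

lemma lin_indep_list_coefficients_unique:
  assumes vs: "lin_indep_list scale vs" and i: "i < length vs"
    and eq: "(\<Sum>j<length vs. c j *s vs ! j) = (\<Sum>j<length vs. e j *s vs ! j)"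
  shows "c i = e i"
proof -
  have d: "distinct vs" "independent (set vs)" using vs by (auto simp: lin_indep_list_def)
  define idx where "idx = inv_into {..<length vs} (nth vs)"
  have idx: "idx (vs ! j) = j" if "j < length vs" for j
    using that inv_into_f_f[OF inj_on_nth[OF d(1), of "{..<length vs}"]] by (simp add: idx_def)
  have "(\<Sum>x\<in>set vs. (c (idx x) - e (idx x)) *s x) = (\<Sum>j<length vs. (c j - e j) *s vs ! j)"
    by (auto simp: sum_distinct_set_conv_nth[OF d(1)] idx intro!: sum.cong)
  also have "\<dots> = 0" using eq by (simp add: scale_left_diff_distrib sum_subtractf)
  finally have "c (idx (vs ! i)) - e (idx (vs ! i)) = 0"
    using independentD[OF d(2), of "set vs" "\<lambda>x. c (idx x) - e (idx x)" "vs ! i"] i by simp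
  then show ?thesis using i by (simp add: idx)
qed

lemma span_set_conv_nth:
  assumes "distinct vs" "w \<in> span (set vs)"
  obtains c where "w = (\<Sum>j<length vs. c j *s vs ! j)"
proof -
  obtain u where "w = (\<Sum>x\<in>set vs. u x *s x)" using assms(2) span_finite[of "set vs"] by auto
  then show ?thesis using that[of "\<lambda>j. u (vs ! j)"] by (simp add: sum_distinct_set_conv_nth[OF assms(1)])
qed

lemma coord_fun_eq:
  assumes vs: "lin_indep_list scale vs" and i: "i < length vs"
    and w: "w = (\<Sum>j<length vs. c j *s vs ! j)"
  shows "coord_fun scale i w vs = c i"
proof -
  have "w \<in> span (set vs)" unfolding w by (intro span_sum span_scale span_base) simp
  moreover have "(THE a. \<exists>c. w = (\<Sum>j<length vs. c j *s vs ! j) \<and> c i = a) = c i"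
    using w lin_indep_list_coefficients_unique[OF vs i] by (intro the_equality) auto
  ultimately show ?thesis using vs by (simp add: coord_fun_def)
qed

lemma span_over_relation_in_subfield:
  fixes x :: "nat \<Rightarrow> 'b"
  assumes U: "independent U" and L: "subfield L" and x: "\<forall>j<p. x j \<in> span_over scale L U"
    and k: "(\<Sum>j<p. k j *s x j) = 0" "\<exists>j<p. k j \<noteq> 0"
  obtains l where "\<forall>j<p. l j \<in> L" "(\<Sum>j<p. l j *s x j) = 0" "\<exists>j<p. l j \<noteq> 0"
proof -
  have span: "x j \<in> span U" if "j < p" for j using x that span_over_iff[OF U L] by blast
  have rep: "representation U (\<Sum>j<p. c j *s x j) u = (\<Sum>j<p. c j * representation U (x j) u)" for c u
  proof -
    have "representation U (\<Sum>j<p. c j *s x j) = (\<lambda>u. \<Sum>j<p. representation U (c j *s x j) u)"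
      using span by (intro representation_sum[OF U]) (simp add: span_scale)
    then show ?thesis using span by (auto intro!: sum.cong simp: representation_scale[OF U])
  qed
  \<comment> \<open>Work in coordinates with respect to U, where all entries lie in L.\<close>
  have "\<forall>j<p. \<forall>u. representation U (x j) u \<in> L" using x span_over_iff[OF U L] by blast
  moreover have "\<forall>u. (\<Sum>j<p. k j * representation U (x j) u) = 0"
    using k(1) rep[of k] by (simp add: representation_zero)
  ultimately obtain l where l: "\<forall>j<p. l j \<in> L" "\<forall>u. (\<Sum>j<p. l j * representation U (x j) u) = 0"
      "\<exists>j<p. l j \<noteq> 0"
    using subfield_homogeneous_solution[OF L, where a = "\<lambda>j u. representation U (x j) u" and k = k] k(2) by blast
  have "(\<Sum>j<p. l j *s x j) \<in> span U" using span by (intro span_sum span_scale) simp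
  then have "(\<Sum>j<p. l j *s x j) = 0"
    using sum_nonzero_representation_eq[OF U, of "\<Sum>j<p. l j *s x j"] by (simp add: rep l(2))
  then show ?thesis using that l(1,3) by blast
qed

lemma span_over_coefficients_in_subfield:
  assumes U: "independent U" and L: "subfield L"
    and vs: "set vs \<subseteq> span_over scale L U" "lin_indep_list scale vs"
    and w: "w \<in> span_over scale L U" "w = (\<Sum>j<length vs. c j *s vs ! j)"
    and i: "i < length vs"
  shows "c i \<in> L"
proof -
  let ?p = "length vs"
  define x where "x j = (if j < ?p then vs ! j else w)" for j
  have x_sum: "(\<Sum>j<Suc ?p. d j *s x j) = (\<Sum>j<?p. d j *s vs ! j) + d ?p *s w" for d
    by (simp add: x_def)
  have "\<forall>j<Suc ?p. x j \<in> span_over scale L U" using vs(1) w(1) by (auto simp: x_def)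
  moreover have "(\<Sum>j<Suc ?p. (if j < ?p then c j else - 1) *s x j) = 0"
    unfolding x_sum using w(2) by simp
  moreover have "\<exists>j<Suc ?p. (if j < ?p then c j else - 1) \<noteq> (0::'a)" by auto
  ultimately obtain l where l: "\<forall>j<Suc ?p. l j \<in> L" "(\<Sum>j<?p. l j *s vs ! j) + l ?p *s w = 0"
      "\<exists>j<Suc ?p. l j \<noteq> 0"
    unfolding x_sum[symmetric] by (rule span_over_relation_in_subfield[OF U L])
  have "l ?p \<noteq> 0"
  proof
    assume "l ?p = 0"
    then have "(\<Sum>j<?p. l j *s vs ! j) = 0" using l(2) by simp
    then have "l j = 0" if "j < ?p" for j
      using lin_indep_list_coefficients_unique[OF vs(2) that, of l "\<lambda>_. 0"] by simp
    with \<open>l ?p = 0\<close> l(3) show False using less_Suc_eq by auto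
  qed
  have "w = (\<Sum>j<?p. (- l j / l ?p) *s vs ! j)"
  proof -
    have "l ?p *s w = - (\<Sum>j<?p. l j *s vs ! j)" using l(2) by (simp add: add_eq_0_iff)
    then have "w = (- inverse (l ?p)) *s (\<Sum>j<?p. l j *s vs ! j)"
      using \<open>l ?p \<noteq> 0\<close> by (metis scale_minus_left scale_minus_right scale_one scale_scale left_inverse)
    then show ?thesis by (simp add: scale_sum_right divide_inverse mult.commute)
  qed
  then have "c i = - l i / l ?p"
    using lin_indep_list_coefficients_unique[OF vs(2) i, of c "\<lambda>j. - l j / l ?p"] w(2) by simp
  then show ?thesis using l(1) i by (simp add: subfield_divide[OF L] subfield_uminus[OF L])
qed

lemma coord_fun_in_subfield:
  assumes U: "independent U" and L: "subfield L"
    and w: "w \<in> span_over scale L U" and vs: "set vs \<subseteq> span_over scale L U" and i: "i < length vs"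
  shows "coord_fun scale i w vs \<in> L"
proof (cases "lin_indep_list scale vs \<and> w \<in> span (set vs)")
  case True
  then obtain c where c: "w = (\<Sum>j<length vs. c j *s vs ! j)"
    using span_set_conv_nth lin_indep_list_def by blast
  then have "coord_fun scale i w vs = c i" using True i by (simp add: coord_fun_eq)
  also have "\<dots> \<in> L" using span_over_coefficients_in_subfield[OF U L vs _ w c i] True by simp
  finally show ?thesis .
next
  case False
  then show ?thesis using subfield_zero[OF L] by (simp only: coord_fun_def if_False)
qed

lemma generated_subset_span_over:
  assumes U: "independent U" and L: "subfield L" and ml: "multilinear_form scale n \<beta>"
    and base_values: "\<forall>xs. length xs = n \<longrightarrow> set xs \<subseteq> U \<longrightarrow> \<beta> xs \<in> L"
  shows "(genV scale n \<beta> U L x \<longrightarrow> x \<in> span_over scale L U) \<and> (genK scale n \<beta> U L a \<longrightarrow> a \<in> L)"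
proof (induction rule: genV_genK.induct)
  case (baseV v) then show ?case using span_over_superset[OF L] by blast
next
  case zeroV then show ?case by (rule span_over_zero)
next
  case (addV v w) then show ?case using span_over_add[OF U L] by blast
next
  case (smul a v) then show ?case using span_over_scale[OF L] by blast
next
  case (formK xs) then show ?case using multilinear_form_span_over_values[OF L ml base_values] by blast
next
  case (coordK i vs v) then show ?case using coord_fun_in_subfield[OF U L] by blast
qed (simp_all add: subfield_zero[OF L] subfield_one[OF L] subfield_add[OF L] subfield_mult[OF L]
       subfield_uminus[OF L] subfield_inverse[OF L])

lemma span_over_subset_generated: "span_over scale L U \<subseteq> {x. genV scale n \<beta> U L x}"
proof
  fix x assume "x \<in> span_over scale L U"
  then obtain F c where F: "finite F" "F \<subseteq> U" "\<forall>u\<in>F. c u \<in> L" and x: "x = (\<Sum>u\<in>F. c u *s u)"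
    by (rule span_overE)
  have "genV scale n \<beta> U L (\<Sum>u\<in>F. c u *s u)"
    using F by (induction F rule: finite_induct) (auto intro: genV_genK.intros)
  then show "x \<in> {x. genV scale n \<beta> U L x}" by (simp add: x)
qed

lemma generated_substructure_eq:
  assumes "independent U" "subfield L" "multilinear_form scale n \<beta>"
    and "\<forall>xs. length xs = n \<longrightarrow> set xs \<subseteq> U \<longrightarrow> \<beta> xs \<in> L"
  shows "{x. genV scale n \<beta> U L x} = span_over scale L U \<and> {a. genK scale n \<beta> U L a} = L"
  using generated_subset_span_over[OF assms] span_over_subset_generated genV_genK.baseK by blast

end

theorem lemma2p15:
  fixes scale :: "'k::field \<Rightarrow> 'v::ab_group_add \<Rightarrow> 'v"
    and n :: nat
    and form :: "'v list \<Rightarrow> 'k"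
    and I :: "'i::wellorder set"
    and v :: "'i \<Rightarrow> 'v"
    and L :: "'k set"
  assumes "n \<ge> 2"
    and "vector_space scale"
    and "\<not> (\<exists>B. finite B \<and> module.span scale B = UNIV)"
    and "alternating_form scale n form"
    and "nondegenerate_form scale n form"
    and "inj_on v I"
    and "\<not> module.dependent scale (v ` I)"
    and "subfield L"
    and "\<forall>is. length is = n \<longrightarrow> sorted_wrt (<) is \<longrightarrow> set is \<subseteq> I \<longrightarrow> form (map v is) \<in> L"
  shows "{x. genV scale n form (v ` I) L x} = span_over scale L (v ` I)
       \<and> {a. genK scale n form (v ` I) L a} = L"
proof -
  interpret vector_space scale by fact
  have "\<forall>xs. length xs = n \<longrightarrow> set xs \<subseteq> v ` I \<longrightarrow> form xs \<in> L"
    using alternating_form_sorted_values[OF assms(8,4,9)] by blast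
  moreover have "multilinear_form scale n form"
    using assms(4) by (simp add: alternating_form_def)
  ultimately show ?thesis
    using generated_substructure_eq[OF assms(7,8)] by blast
qed

end
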